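(* Let $a\in\mathbb C\setminus\{0\}$ and $b\in\mathbb C$. Then $\{\mathrm{comm}(\widehat{\mathcal B}(a,b)_\lambda):\lambda\text{ a partition}\}$ is a multiplicative basis of $\mathsf{Sym}$, i.e. a basis with $\mathrm{comm}(\widehat{\mathcal B}(a,b)_\lambda)\,\mathrm{comm}(\widehat{\mathcal B}(a,b)_\mu)=\mathrm{comm}(\widehat{\mathcal B}(a,b)_{\lambda\cdot\mu})$ for all partitions $\lambda,\mu$.
   Context: $\mathsf{NSym}$ is the algebra of noncommutative symmetric functions over $\mathbb C$ with basis $H_\alpha=H_{\alpha_1}\cdots H_{\alpha_l}$; $\mathsf{Sym}$ is the algebra of symmetric functions and $\mathrm{comm}:\mathsf{NSym}\to\mathsf{Sym}$ the algebra homomorphism $H_n\mapsto h_n$. For a composition $\alpha$ of $n$, $\mathrm{set}(\alpha)=\{\alpha_1,\dots,\alpha_1+\dots+\alpha_{l-1}\}$, $\ell(\alpha)=l$, $\beta\preceq\alpha$ means $\mathrm{set}(\alpha)\subseteq\mathrm{set}(\beta)$. $\widehat{\mathcal B}(a,b)_\alpha=\sum_{\beta\preceq\alpha}a^{n-\ell(\beta)}b^{\ell(\beta)-\ell(\alpha)}H_\beta$ (convention $0^0=1$), $1$ for the empty composition; a partition is regarded as a weakly decreasing composition, and for partitions $\lambda,\mu$, $\lambda\cdot\mu$ denotes the partition obtained by sorting the concatenation of their parts. *)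

theory Defs
  imports Complex_Main "HOL-Library.Multiset" "HOL-Library.Poly_Mapping"
begin

text \<open>Model of Sym: Sym is the polynomial algebra over C freely generated by h_1, h_2, ...
  An element is a finitely supported map from monomials (multisets of variable indices)
  to complex coefficients; the monomial with multiset m is the product of h_k over k in m.
  Sym is the subalgebra whose monomials only involve indices k >= 1.\<close>

type_synonym sym = "nat multiset \<Rightarrow>\<^sub>0 complex"

definition Sym :: "sym set" where
  "Sym = {p. \<forall>m \<in> Poly_Mapping.keys p. 0 \<notin># m}"

definition sscale :: "complex \<Rightarrow> sym \<Rightarrow> sym" where
  "sscale c p = Poly_Mapping.single {#} c * p"

text \<open>comm(H_alpha) = h_{alpha_1} ... h_{alpha_l}.\<close>
definition commH :: "nat list \<Rightarrow> sym" where
  "commH \<alpha> = Poly_Mapping.single (mset \<alpha>) 1"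

definition compositions :: "nat \<Rightarrow> nat list set" where
  "compositions n = {\<beta>. 0 \<notin> set \<beta> \<and> sum_list \<beta> = n}"

definition comp_set :: "nat list \<Rightarrow> nat set" where
  "comp_set \<alpha> = {sum_list (take i \<alpha>) | i. 1 \<le> i \<and> i < length \<alpha>}"

definition refines :: "nat list \<Rightarrow> nat list \<Rightarrow> bool" where
  "refines \<beta> \<alpha> \<longleftrightarrow> comp_set \<alpha> \<subseteq> comp_set \<beta>"

text \<open>comm(\<widehat>B(a,b)_alpha) for a composition alpha of n (0^0 = 1 holds for power).\<close>
definition commBhat :: "complex \<Rightarrow> complex \<Rightarrow> nat list \<Rightarrow> sym" where
  "commBhat a b \<alpha> =
     (\<Sum>\<beta> \<in> {\<beta> \<in> compositions (sum_list \<alpha>). refines \<beta> \<alpha>}.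
        sscale (a ^ (sum_list \<alpha> - length \<beta>) * b ^ (length \<beta> - length \<alpha>)) (commH \<beta>))"

definition is_partition :: "nat list \<Rightarrow> bool" where
  "is_partition lam \<longleftrightarrow> sorted_wrt (\<ge>) lam \<and> 0 \<notin> set lam"

definition part_mult :: "nat list \<Rightarrow> nat list \<Rightarrow> nat list" where
  "part_mult lam mu = rev (sort (lam @ mu))"

end

theory Submission
  imports Defs
begin

(* A refinement of a composition k # alpha is a concatenation of a composition of k with a
   refinement of alpha, and the weights a^(n - l(beta)) b^(l(beta) - l(alpha)) factor along this
   splitting; so comm(Bhat_alpha) is the product of comm(Bhat_(k)) over the parts k of alpha,
   which gives multiplicativity. Every refinement of alpha other than alpha itself is strictly
   longer, so comm(Bhat_lambda) = a^(n - l(lambda)) h_lambda + (terms h_beta with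
   l(beta) > l(lambda)). For a nonzero a this is unitriangular with respect to length: the
   coefficient of h_lambda for a shortest lambda with nonzero coefficient gives independence,
   and induction on n - l(beta) writes every h_beta in terms of the comm(Bhat_lambda). *)

lemma lookup_sscale: "Poly_Mapping.lookup (sscale c p) m = c * Poly_Mapping.lookup p m"
  unfolding sscale_def mult_map_scale_conv_mult[symmetric]
  by (simp add: Poly_Mapping.map.rep_eq when_def)

interpretation sym_space: module sscale
proof
  show "sscale a (x + y) = sscale a x + sscale a y" for a x y
    by (simp add: sscale_def distrib_left)
  show "sscale (a + b) x = sscale a x + sscale b x" for a b x
    by (simp add: sscale_def single_add distrib_right)
  show "sscale a (sscale b x) = sscale (a * b) x" for a b x
    by (simp add: sscale_def mult.assoc[symmetric] mult_single)
  show "sscale 1 x = x" for x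
    by (simp add: sscale_def)
qed

lemma sscale_mult: "sscale x p * sscale y q = sscale (x * y) (p * q)"
  by (simp add: sscale_def mult_single algebra_simps)

lemma sym_space_span_image_iff:
  "p \<in> sym_space.span (f ` P) \<longleftrightarrow>
     (\<exists>S c. finite S \<and> S \<subseteq> P \<and> p = (\<Sum>x\<in>S. sscale (c x) (f x)))"
proof
  assume "p \<in> sym_space.span (f ` P)"
  then obtain t r where t: "finite t" "t \<subseteq> f ` P" "p = (\<Sum>v\<in>t. sscale (r v) v)"
    unfolding sym_space.span_explicit by blast
  then obtain S where S: "S \<subseteq> P" "inj_on f S" "t = f ` S"
    by (auto simp: subset_image_inj)
  have "finite S" using t(1) S by (simp add: finite_image_iff)
  moreover have "p = (\<Sum>x\<in>S. sscale (r (f x)) (f x))"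
    unfolding t(3) S(3) by (simp add: sum.reindex[OF S(2)])
  ultimately show "\<exists>S c. finite S \<and> S \<subseteq> P \<and> p = (\<Sum>x\<in>S. sscale (c x) (f x))"
    using S(1) by (intro exI[of _ S] exI[of _ "r \<circ> f"]) simp
next
  assume "\<exists>S c. finite S \<and> S \<subseteq> P \<and> p = (\<Sum>x\<in>S. sscale (c x) (f x))"
  then obtain S c where "S \<subseteq> P" "p = (\<Sum>x\<in>S. sscale (c x) (f x))"
    by blast
  then show "p \<in> sym_space.span (f ` P)"
    by (auto intro!: sym_space.span_sum sym_space.span_scale intro: sym_space.span_base)
qed

lemma sum_list_pos: "0 \<notin> set (xs :: nat list) \<Longrightarrow> xs \<noteq> [] \<Longrightarrow> 0 < sum_list xs"
  by (cases xs) auto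

lemma length_le_sum_list: "0 \<notin> set (xs :: nat list) \<Longrightarrow> length xs \<le> sum_list xs"
  by (induction xs) auto

lemma finite_compositions: "finite (compositions n)"
proof -
  have "compositions n \<subseteq> {xs. set xs \<subseteq> {..n} \<and> length xs \<le> n}"
    unfolding compositions_def using length_le_sum_list member_le_sum_list by fastforce
  then show ?thesis by (rule finite_subset) (simp add: finite_lists_length_le)
qed

lemma comp_set_append:
  assumes "\<gamma> \<noteq> []" "\<delta> \<noteq> []"
  shows "comp_set (\<gamma> @ \<delta>) =
    comp_set \<gamma> \<union> {sum_list \<gamma>} \<union> (\<lambda>x. sum_list \<gamma> + x) ` comp_set \<delta>"
proof (intro equalityI subsetI)
  fix x assume "x \<in> comp_set (\<gamma> @ \<delta>)"
  then obtain i where i: "1 \<le> i" "i < length \<gamma> + length \<delta>" "x = sum_list (take i (\<gamma> @ \<delta>))"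
    by (auto simp: comp_set_def)
  consider "i < length \<gamma>" | "i = length \<gamma>" | "length \<gamma> < i" by linarith
  then show "x \<in> comp_set \<gamma> \<union> {sum_list \<gamma>} \<union> (\<lambda>x. sum_list \<gamma> + x) ` comp_set \<delta>"
  proof cases
    case 3
    then have "x = sum_list \<gamma> + sum_list (take (i - length \<gamma>) \<delta>)"
      using i by simp
    moreover have "1 \<le> i - length \<gamma>" "i - length \<gamma> < length \<delta>" using 3 i by auto
    ultimately show ?thesis by (auto simp: comp_set_def)
  qed (use i in \<open>auto simp: comp_set_def\<close>)
next
  fix x assume "x \<in> comp_set \<gamma> \<union> {sum_list \<gamma>} \<union> (\<lambda>x. sum_list \<gamma> + x) ` comp_set \<delta>"
  then consider i where "1 \<le> i" "i < length \<gamma>" "x = sum_list (take i \<gamma>)"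
    | "x = sum_list \<gamma>"
    | j where "1 \<le> j" "j < length \<delta>" "x = sum_list \<gamma> + sum_list (take j \<delta>)"
    by (auto simp: comp_set_def)
  then show "x \<in> comp_set (\<gamma> @ \<delta>)"
  proof cases
    case (1 i)
    then show ?thesis unfolding comp_set_def by (intro CollectI exI[of _ i]) auto
  next
    case 2
    then show ?thesis using assms unfolding comp_set_def
      by (intro CollectI exI[of _ "length \<gamma>"]) (auto simp: Suc_le_eq)
  next
    case (3 j)
    then show ?thesis unfolding comp_set_def
      by (intro CollectI exI[of _ "length \<gamma> + j"]) auto
  qed
qed

lemma comp_set_Cons:
  "\<alpha> \<noteq> [] \<Longrightarrow> comp_set (k # \<alpha>) = insert k ((\<lambda>x. k + x) ` comp_set \<alpha>)"
  using comp_set_append[of "[k]" \<alpha>] by (simp add: comp_set_def)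

lemma comp_set_subset:
  assumes "0 \<notin> set \<alpha>"
  shows "comp_set \<alpha> \<subseteq> {0<..<sum_list \<alpha>}"
proof
  fix x assume "x \<in> comp_set \<alpha>"
  then obtain i where i: "1 \<le> i" "i < length \<alpha>" "x = sum_list (take i \<alpha>)"
    by (auto simp: comp_set_def)
  have "0 < sum_list (take i \<alpha>)" "0 < sum_list (drop i \<alpha>)"
    using i assms by (auto intro!: sum_list_pos dest: in_set_takeD in_set_dropD)
  moreover have "sum_list \<alpha> = sum_list (take i \<alpha>) + sum_list (drop i \<alpha>)"
    by (metis append_take_drop_id sum_list_append)
  ultimately show "x \<in> {0<..<sum_list \<alpha>}" using i by simp
qed

definition refinements :: "nat list \<Rightarrow> nat list set" where
  "refinements \<alpha> = {\<beta> \<in> compositions (sum_list \<alpha>). refines \<beta> \<alpha>}"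

lemma finite_refinements: "finite (refinements \<alpha>)"
  unfolding refinements_def using finite_compositions by simp

lemma self_in_refinements: "0 \<notin> set \<alpha> \<Longrightarrow> \<alpha> \<in> refinements \<alpha>"
  by (simp add: refinements_def compositions_def refines_def)

lemma refinements_Nil: "refinements [] = {[]}"
  using sum_list_pos
  by (fastforce simp: refinements_def compositions_def refines_def comp_set_def
      simp del: sum_list_eq_0_iff)

lemma refinements_single: "refinements [k] = compositions k"
  by (auto simp: refinements_def refines_def comp_set_def)

lemma commBhat_refinements:
  "commBhat a b \<alpha> = (\<Sum>\<beta>\<in>refinements \<alpha>.
     sscale (a ^ (sum_list \<alpha> - length \<beta>) * b ^ (length \<beta> - length \<alpha>)) (commH \<beta>))"
  unfolding commBhat_def refinements_def ..

lemma refinements_Cons: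
  assumes k: "0 < k" and \<alpha>: "0 \<notin> set \<alpha>" "\<alpha> \<noteq> []"
  shows "refinements (k # \<alpha>) = (\<lambda>(\<gamma>, \<delta>). \<gamma> @ \<delta>) ` (compositions k \<times> refinements \<alpha>)"
proof (intro equalityI subsetI)
  fix \<beta> assume "\<beta> \<in> refinements (k # \<alpha>)"
  then have pos: "0 \<notin> set \<beta>" and sum: "sum_list \<beta> = k + sum_list \<alpha>"
    and sub: "insert k ((\<lambda>x. k + x) ` comp_set \<alpha>) \<subseteq> comp_set \<beta>"
    by (auto simp: refinements_def compositions_def refines_def comp_set_Cons[OF \<alpha>(2)])
  then obtain i where i: "1 \<le> i" "i < length \<beta>" "k = sum_list (take i \<beta>)"
    by (auto simp: comp_set_def)
  define \<gamma> \<delta> where "\<gamma> = take i \<beta>" and "\<delta> = drop i \<beta>"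
  have \<beta>: "\<beta> = \<gamma> @ \<delta>" and "\<gamma> \<noteq> []" "\<delta> \<noteq> []" and sum_\<gamma>: "sum_list \<gamma> = k"
    using i by (auto simp: \<gamma>_def \<delta>_def)
  have pos_\<gamma>: "0 \<notin> set \<gamma>" and pos_\<delta>: "0 \<notin> set \<delta>" using pos \<beta> by auto
  have split: "comp_set \<beta> = comp_set \<gamma> \<union> {k} \<union> (\<lambda>x. k + x) ` comp_set \<delta>"
    using comp_set_append[OF \<open>\<gamma> \<noteq> []\<close> \<open>\<delta> \<noteq> []\<close>] \<beta> sum_\<gamma> by simp
  have "comp_set \<alpha> \<subseteq> comp_set \<delta>"
  proof
    fix x assume x: "x \<in> comp_set \<alpha>"
    have "k + x \<in> comp_set \<beta>" using sub x by auto
    moreover have "0 < x" using comp_set_subset[OF \<alpha>(1)] x by auto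
    moreover have "\<forall>y\<in>comp_set \<gamma>. y < k" using comp_set_subset[OF pos_\<gamma>] sum_\<gamma> by auto
    ultimately show "x \<in> comp_set \<delta>" unfolding split by force
  qed
  then have "\<gamma> \<in> compositions k" "\<delta> \<in> refinements \<alpha>"
    using pos_\<gamma> pos_\<delta> sum sum_\<gamma> \<beta>
    by (auto simp: compositions_def refinements_def refines_def)
  then show "\<beta> \<in> (\<lambda>(\<gamma>, \<delta>). \<gamma> @ \<delta>) ` (compositions k \<times> refinements \<alpha>)"
    using \<beta> by blast
next
  fix \<beta> assume "\<beta> \<in> (\<lambda>(\<gamma>, \<delta>). \<gamma> @ \<delta>) ` (compositions k \<times> refinements \<alpha>)"
  then obtain \<gamma> \<delta> where \<beta>: "\<beta> = \<gamma> @ \<delta>" and \<gamma>: "\<gamma> \<in> compositions k"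
    and \<delta>: "\<delta> \<in> refinements \<alpha>" by auto
  have "\<gamma> \<noteq> []" using \<gamma> k by (auto simp: compositions_def)
  moreover have "\<delta> \<noteq> []"
    using \<delta> sum_list_pos[OF \<alpha>]
    by (auto simp: refinements_def compositions_def simp del: sum_list_eq_0_iff)
  ultimately have "comp_set \<beta> = comp_set \<gamma> \<union> {k} \<union> (\<lambda>x. k + x) ` comp_set \<delta>"
    using comp_set_append \<beta> \<gamma> by (simp add: compositions_def)
  then show "\<beta> \<in> refinements (k # \<alpha>)"
    using \<gamma> \<delta> \<beta> comp_set_Cons[OF \<alpha>(2)]
    by (auto simp: refinements_def compositions_def refines_def)
qed

lemma inj_on_append_compositions: "inj_on (\<lambda>(\<gamma>, \<delta>). \<gamma> @ \<delta>) (compositions k \<times> A)"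
proof (rule inj_onI, clarsimp)
  fix \<gamma> \<delta> \<gamma>' \<delta>'
  assume "\<gamma> \<in> compositions k" "\<gamma>' \<in> compositions k" and eq: "\<gamma> @ \<delta> = \<gamma>' @ \<delta>'"
  then have pos: "0 \<notin> set \<gamma>" "0 \<notin> set \<gamma>'" and sum: "sum_list \<gamma> = sum_list \<gamma>'"
    by (auto simp: compositions_def)
  from eq obtain us where us: "\<gamma> = \<gamma>' @ us \<and> us @ \<delta> = \<delta>' \<or> \<gamma> @ us = \<gamma>' \<and> \<delta> = us @ \<delta>'"
    by (auto simp: append_eq_append_conv2)
  then have "0 \<notin> set us" "sum_list us = 0"
    using pos sum by (auto simp del: sum_list_eq_0_iff)
  then have "us = []" by (metis less_irrefl sum_list_pos)
  with us show "\<gamma> = \<gamma>' \<and> \<delta> = \<delta>'" by auto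
qed

lemma commH_append: "commH (\<beta> @ \<gamma>) = commH \<beta> * commH \<gamma>"
  by (simp add: commH_def mult_single)

lemma length_refinement:
  assumes "0 \<notin> set \<alpha>" "\<beta> \<in> refinements \<alpha>"
  shows "length \<alpha> \<le> length \<beta> \<and> (length \<beta> \<le> length \<alpha> \<longrightarrow> \<beta> = \<alpha>)"
  using assms
proof (induction \<alpha> arbitrary: \<beta>)
  case Nil
  then show ?case by (simp add: refinements_Nil)
next
  case (Cons k \<alpha>)
  have k: "0 < k" and \<alpha>: "0 \<notin> set \<alpha>" using Cons.prems by auto
  have singleton: "\<gamma> = [k]" if "\<gamma> \<in> compositions k" "length \<gamma> \<le> 1" for \<gamma>
    using that k by (cases \<gamma>) (auto simp: compositions_def)
  show ?case
  proof (cases "\<alpha> = []")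
    case True
    with Cons.prems(2) have "\<beta> \<in> compositions k" by (simp add: refinements_single)
    moreover from this have "\<beta> \<noteq> []" using k by (auto simp: compositions_def)
    ultimately show ?thesis using singleton True by (cases \<beta>) auto
  next
    case False
    then obtain \<gamma> \<delta> where \<beta>: "\<beta> = \<gamma> @ \<delta>" and \<gamma>: "\<gamma> \<in> compositions k"
      and \<delta>: "\<delta> \<in> refinements \<alpha>"
      using Cons.prems(2) refinements_Cons[OF k \<alpha> False] by auto
    have "\<gamma> \<noteq> []" using \<gamma> k by (auto simp: compositions_def)
    then show ?thesis
      using Cons.IH[OF \<alpha> \<delta>] singleton[OF \<gamma>] \<beta> by (cases \<gamma>) auto
  qed
qed

lemma commBhat_Nil: "commBhat a b [] = 1"
  by (simp add: commBhat_refinements refinements_Nil sscale_def commH_def)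

lemma commBhat_Cons:
  assumes k: "0 < k" and \<alpha>: "0 \<notin> set \<alpha>" "\<alpha> \<noteq> []"
  shows "commBhat a b (k # \<alpha>) = commBhat a b [k] * commBhat a b \<alpha>"
proof -
  let ?n = "sum_list \<alpha>"
  let ?F = "\<lambda>\<beta>. sscale (a ^ (k + ?n - length \<beta>) * b ^ (length \<beta> - Suc (length \<alpha>))) (commH \<beta>)"
  let ?G = "\<lambda>\<gamma>. sscale (a ^ (k - length \<gamma>) * b ^ (length \<gamma> - 1)) (commH \<gamma>)"
  let ?D = "\<lambda>\<delta>. sscale (a ^ (?n - length \<delta>) * b ^ (length \<delta> - length \<alpha>)) (commH \<delta>)"
  have "commBhat a b (k # \<alpha>) = (\<Sum>\<beta>\<in>refinements (k # \<alpha>). ?F \<beta>)"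
    by (simp add: commBhat_refinements)
  also have "\<dots> = (\<Sum>(\<gamma>, \<delta>)\<in>compositions k \<times> refinements \<alpha>. ?F (\<gamma> @ \<delta>))"
    unfolding refinements_Cons[OF assms]
    by (subst sum.reindex[OF inj_on_append_compositions]) (simp add: case_prod_beta')
  also have "\<dots> = (\<Sum>\<gamma>\<in>compositions k. \<Sum>\<delta>\<in>refinements \<alpha>. ?G \<gamma> * ?D \<delta>)"
    unfolding sum.cartesian_product[symmetric]
  proof (intro sum.cong refl)
    fix \<gamma> \<delta> assume \<gamma>: "\<gamma> \<in> compositions k" and \<delta>: "\<delta> \<in> refinements \<alpha>"
    have "1 \<le> length \<gamma>" "length \<gamma> \<le> k"
      using \<gamma> k length_le_sum_list[of \<gamma>] by (auto simp: compositions_def Suc_le_eq)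
    moreover have "length \<alpha> \<le> length \<delta>" "length \<delta> \<le> ?n"
      using \<delta> length_refinement[OF \<alpha>(1) \<delta>] length_le_sum_list[of \<delta>]
      by (auto simp: refinements_def compositions_def)
    ultimately have "k + ?n - length (\<gamma> @ \<delta>) = (k - length \<gamma>) + (?n - length \<delta>)"
      and "length (\<gamma> @ \<delta>) - Suc (length \<alpha>) = (length \<gamma> - 1) + (length \<delta> - length \<alpha>)"
      by auto
    then show "?F (\<gamma> @ \<delta>) = ?G \<gamma> * ?D \<delta>"
      by (simp only: sscale_mult commH_append power_add mult_ac)
  qed
  also have "\<dots> = (\<Sum>\<gamma>\<in>compositions k. ?G \<gamma>) * (\<Sum>\<delta>\<in>refinements \<alpha>. ?D \<delta>)"
    by (simp add: sum_product)
  also have "\<dots> = commBhat a b [k] * commBhat a b \<alpha>"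
    by (simp add: commBhat_refinements refinements_single)
  finally show ?thesis .
qed

lemma commBhat_eq_prod_mset:
  "0 \<notin> set \<alpha> \<Longrightarrow> commBhat a b \<alpha> = (\<Prod>k\<in>#mset \<alpha>. commBhat a b [k])"
proof (induction \<alpha>)
  case Nil
  then show ?case by (simp add: commBhat_Nil)
next
  case (Cons k \<alpha>)
  then show ?case by (cases "\<alpha> = []") (simp_all add: commBhat_Cons)
qed

lemma commBhat_part_mult:
  assumes "0 \<notin> set lam" "0 \<notin> set mu"
  shows "commBhat a b lam * commBhat a b mu = commBhat a b (part_mult lam mu)"
proof -
  have "0 \<notin> set (part_mult lam mu)"
    using assms by (simp add: part_mult_def)
  moreover have "mset (part_mult lam mu) = mset lam + mset mu"
    by (simp add: part_mult_def)
  ultimately show ?thesis using assms by (simp add: commBhat_eq_prod_mset)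
qed

lemma commBhat_in_Sym: "commBhat a b \<alpha> \<in> Sym"
proof -
  have "Poly_Mapping.keys (sscale c (commH \<beta>)) \<subseteq> {mset \<beta>}" for c \<beta>
    by (auto simp: in_keys_iff lookup_sscale commH_def lookup_single when_def split: if_splits)
  then have "Poly_Mapping.keys (commBhat a b \<alpha>) \<subseteq> (\<Union>\<beta>\<in>refinements \<alpha>. {mset \<beta>})"
    unfolding commBhat_refinements by (rule order_trans[OF keys_sum UN_mono[OF order_refl]])
  then show ?thesis
    by (auto simp: Sym_def refinements_def compositions_def)
qed

lemma lookup_commBhat_size_le:
  assumes \<alpha>: "0 \<notin> set \<alpha>" and m: "size m \<le> length \<alpha>"
  shows "Poly_Mapping.lookup (commBhat a b \<alpha>) m =
    (if m = mset \<alpha> then a ^ (sum_list \<alpha> - length \<alpha>) else 0)"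
proof -
  let ?w = "\<lambda>\<beta>. a ^ (sum_list \<alpha> - length \<beta>) * b ^ (length \<beta> - length \<alpha>)"
  have "Poly_Mapping.lookup (commBhat a b \<alpha>) m =
      (\<Sum>\<beta>\<in>refinements \<alpha>. ?w \<beta> * (if mset \<beta> = m then 1 else 0))"
    by (simp add: commBhat_refinements lookup_sum lookup_sscale commH_def lookup_single when_def)
  also have "\<dots> = (\<Sum>\<beta>\<in>refinements \<alpha>. if \<beta> = \<alpha> then (if m = mset \<alpha> then ?w \<alpha> else 0) else 0)"
  proof (rule sum.cong[OF refl])
    fix \<beta> assume "\<beta> \<in> refinements \<alpha>"
    moreover have "length \<beta> \<le> length \<alpha>" if "mset \<beta> = m"
      using m that by (metis size_mset)
    ultimately show "?w \<beta> * (if mset \<beta> = m then 1 else 0) =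
        (if \<beta> = \<alpha> then (if m = mset \<alpha> then ?w \<alpha> else 0) else 0)"
      using length_refinement[OF \<alpha>] by auto
  qed
  also have "\<dots> = (if m = mset \<alpha> then ?w \<alpha> else 0)"
    using self_in_refinements[OF \<alpha>] finite_refinements[of \<alpha>] by simp
  finally show ?thesis by simp
qed

lemma partition_eqI:
  assumes "is_partition lam" "is_partition mu" "mset lam = mset mu"
  shows "lam = mu"
proof -
  have "sorted (rev lam)" "sorted (rev mu)"
    using assms(1,2) by (simp_all add: is_partition_def sorted_wrt_rev)
  then have "rev lam = sort (rev mu)"
    using properties_for_sort[of "rev lam" "rev mu"] assms(3) by simp
  also have "\<dots> = rev mu"
    using \<open>sorted (rev mu)\<close> by (rule sorted_sort_id)
  finally show ?thesis by simp
qed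

lemma commBhat_partitions_independent:
  assumes a: "a \<noteq> 0" and S: "finite S" "\<forall>lam\<in>S. is_partition lam"
    and zero: "(\<Sum>lam\<in>S. sscale (c lam) (commBhat a b lam)) = 0"
  shows "\<forall>lam\<in>S. c lam = 0"
proof (rule ccontr)
  assume "\<not> (\<forall>lam\<in>S. c lam = 0)"
  then have T: "finite {lam \<in> S. c lam \<noteq> 0}" "{lam \<in> S. c lam \<noteq> 0} \<noteq> {}"
    using S(1) by auto
  define l where "l = arg_min_on length {lam \<in> S. c lam \<noteq> 0}"
  have l: "l \<in> S" "c l \<noteq> 0"
    and l_min: "\<And>lam. lam \<in> S \<Longrightarrow> c lam \<noteq> 0 \<Longrightarrow> length l \<le> length lam"
    using arg_min_if_finite[OF T, of length] by (auto simp: l_def not_less[symmetric])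
  have "0 = Poly_Mapping.lookup (\<Sum>lam\<in>S. sscale (c lam) (commBhat a b lam)) (mset l)"
    using zero by simp
  also have "\<dots> = (\<Sum>lam\<in>S. c lam * Poly_Mapping.lookup (commBhat a b lam) (mset l))"
    by (simp add: lookup_sum lookup_sscale)
  also have "\<dots> = (\<Sum>lam\<in>S. if lam = l then c l * a ^ (sum_list l - length l) else 0)"
  proof (rule sum.cong[OF refl])
    fix lam assume lam: "lam \<in> S"
    show "c lam * Poly_Mapping.lookup (commBhat a b lam) (mset l) =
      (if lam = l then c l * a ^ (sum_list l - length l) else 0)"
    proof (cases "c lam = 0")
      case False
      have "is_partition lam" "is_partition l" using lam l(1) S(2) by auto
      then have "0 \<notin> set lam" and "mset l = mset lam \<longleftrightarrow> lam = l"
        using partition_eqI by (auto simp: is_partition_def)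
      then show ?thesis
        using lookup_commBhat_size_le[of lam "mset l"] l_min[OF lam False] by auto
    qed (use l(2) in auto)
  qed
  also have "\<dots> = c l * a ^ (sum_list l - length l)"
    using l(1) S(1) by simp
  finally show False using l(2) a by simp
qed

lemma commH_in_span:
  assumes a: "a \<noteq> 0"
  shows "0 \<notin> set \<beta> \<Longrightarrow> commH \<beta> \<in> sym_space.span (commBhat a b ` Collect is_partition)"
proof (induction "sum_list \<beta> - length \<beta>" arbitrary: \<beta> rule: less_induct)
  case less
  let ?span = "sym_space.span (commBhat a b ` Collect is_partition)"
  define lam where "lam = rev (sort \<beta>)"
  have mset_lam: "mset lam = mset \<beta>" by (simp add: lam_def)
  then have sum_lam: "sum_list lam = sum_list \<beta>" and length_lam: "length lam = length \<beta>"
    by (metis sum_mset_sum_list, metis size_mset)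
  have lam: "is_partition lam" using less.prems
    by (simp add: is_partition_def lam_def sorted_wrt_rev)
  then have pos: "0 \<notin> set lam" by (simp add: is_partition_def)
  let ?w = "\<lambda>\<gamma>. a ^ (sum_list lam - length \<gamma>) * b ^ (length \<gamma> - length lam)"
  define R where "R = (\<Sum>\<gamma>\<in>refinements lam - {lam}. sscale (?w \<gamma>) (commH \<gamma>))"
  have "commBhat a b lam = sscale (?w lam) (commH lam) + R"
    unfolding commBhat_refinements R_def
    using self_in_refinements[OF pos] finite_refinements[of lam] by (simp add: sum.remove)
  then have "commH lam = sscale (inverse (?w lam)) (commBhat a b lam - R)"
    using a by simp
  moreover have "R \<in> ?span"
    unfolding R_def
  proof (intro sym_space.span_sum sym_space.span_scale)
    fix \<gamma> assume \<gamma>: "\<gamma> \<in> refinements lam - {lam}"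
    then have "0 \<notin> set \<gamma>" "sum_list \<gamma> = sum_list lam" "length lam < length \<gamma>"
      using length_refinement[OF pos, of \<gamma>]
      by (auto simp: refinements_def compositions_def)
    moreover note length_le_sum_list[OF \<open>0 \<notin> set \<gamma>\<close>]
    ultimately show "commH \<gamma> \<in> ?span"
      using less.hyps sum_lam length_lam by simp
  qed
  moreover have "commBhat a b lam \<in> ?span"
    using lam by (intro sym_space.span_base) simp
  ultimately have "commH lam \<in> ?span"
    by (simp add: sym_space.span_scale sym_space.span_diff)
  then show ?case by (simp add: commH_def mset_lam)
qed

lemma Sym_subset_span:
  assumes "a \<noteq> 0"
  shows "Sym \<subseteq> sym_space.span (commBhat a b ` Collect is_partition)"
proof
  fix p assume p: "p \<in> Sym"
  have "p = (\<Sum>m\<in>Poly_Mapping.keys p. Poly_Mapping.single m (Poly_Mapping.lookup p m))"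
    by (rule poly_mapping_eqI)
      (simp add: lookup_sum lookup_single when_def in_keys_iff)
  also have "\<dots> = (\<Sum>m\<in>Poly_Mapping.keys p.
      sscale (Poly_Mapping.lookup p m) (commH (sorted_list_of_multiset m)))"
    by (simp add: sscale_def commH_def mult_single)
  also have "\<dots> \<in> sym_space.span (commBhat a b ` Collect is_partition)"
    using p by (intro sym_space.span_sum sym_space.span_scale commH_in_span[OF assms])
      (simp add: Sym_def)
  finally show "p \<in> sym_space.span (commBhat a b ` Collect is_partition)" .
qed

theorem proposition4p13:
  fixes a b :: complex
  assumes "a \<noteq> 0"
  shows "(\<forall>lam. is_partition lam \<longrightarrow> commBhat a b lam \<in> Sym)
    \<and> (\<forall>S c. finite S \<and> (\<forall>lam\<in>S. is_partition lam)
          \<and> (\<Sum>lam\<in>S. sscale (c lam) (commBhat a b lam)) = 0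
          \<longrightarrow> (\<forall>lam\<in>S. c lam = 0))
    \<and> (\<forall>p \<in> Sym. \<exists>S c. finite S \<and> (\<forall>lam\<in>S. is_partition lam)
          \<and> p = (\<Sum>lam\<in>S. sscale (c lam) (commBhat a b lam)))
    \<and> (\<forall>lam mu. is_partition lam \<and> is_partition mu \<longrightarrow>
          commBhat a b lam * commBhat a b mu = commBhat a b (part_mult lam mu))"
proof (intro conjI allI impI ballI)
  fix p assume "p \<in> Sym"
  then have "p \<in> sym_space.span (commBhat a b ` Collect is_partition)"
    using Sym_subset_span[OF assms] by blast
  then show "\<exists>S c. finite S \<and> (\<forall>lam\<in>S. is_partition lam)
      \<and> p = (\<Sum>lam\<in>S. sscale (c lam) (commBhat a b lam))"
    by (simp add: sym_space_span_image_iff subset_eq)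
qed (use commBhat_in_Sym commBhat_partitions_independent[OF assms] commBhat_part_mult
    in \<open>auto simp: is_partition_def\<close>)

end
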